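(* Let $L$ be a subspace of $\bigwedge^{k}V$ and $j\leq n$, and let $K$ be the largest subspace of $\bigwedge^{k-1}V^{(j)}$ such that $e_j\wedge K\subseteq L$. Suppose $L$ is monomial with respect to $e_j$, i.e. $L=\big(L\cap\bigwedge^{k}V^{(j)}\big)\oplus\big(L\cap(e_{j}\wedge\bigwedge^{k-1}V^{(j)})\big)$, and let $1\leq i<j$. Then \[ N_{j\to i}L=\left(\Big(L\cap\bigwedge^{k}V^{(j)}\Big)+\left(e_{i}\wedge K\right)\right)\oplus\left(e_{j}\wedge K'\right), \] where $K'$ is the largest subspace of $K$ such that $e_{i}\wedge K'\subseteq L$.
   Context: $\mathbb{F}$ is a field (assumed throughout the paper, for expository purposes, to have characteristic not $2$), $V$ is an $n$-dimensional $\mathbb{F}$-vector space with a fixed basis $e_1,\dots,e_n$, and $\bigwedge V$ its exterior algebra. For $j\in[n]$, $V^{(j)}$ is the span of $\{e_h:h\neq j\}$, and $\bigwedge V^{(j)}$ is viewed as a subalgebra of $\bigwedge V$. Slow shift: for distinct $i,j\in[n]$ and nonzero $m\in\bigwedge^kV$, write uniquely $m=x+e_j\wedge y$ with $x\in\bigwedge^kV^{(j)}$, $y\in\bigwedge^{k-1}V^{(j)}$, and set $N_{j\to i}m=x+e_i\wedge y$ if this is nonzero, and $N_{j\to i}m=e_j\wedge y$ otherwise (the limit as $t\to0$ of the projective action of the linear map $e_j\mapsto e_i+te_j$ fixing the other $e_h$). For a subspace $L$ of $\bigwedge^kV$, $N_{j\to i}L$ is the span of $\{N_{j\to i}m:m\in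 L\setminus\{0\}\}$; it has the same dimension as $L$. *)

theory Defs
  imports Main "HOL.Modules" "HOL-Library.Function_Algebras"
begin

text \<open>Model of the exterior algebra of V = F^n with basis e_1..e_n:
  an element is a coefficient function on finite index sets S \<subseteq> {1..n};
  the function m represents sum over S of (m S) e_S, where e_S is the wedge of the
  e_s (s in S) in increasing order.\<close>

type_synonym 'a ext = "nat set \<Rightarrow> 'a"

definition escale :: "'a::field \<Rightarrow> 'a ext \<Rightarrow> 'a ext" where
  "escale c m = (\<lambda>T. c * m T)"

interpretation ext: module "escale :: 'a::field \<Rightarrow> 'a ext \<Rightarrow> 'a ext"
  by unfold_locales (auto simp: escale_def algebra_simps fun_eq_iff)

abbreviation ext_subspace :: "'a::field ext set \<Rightarrow> bool" where
  "ext_subspace S \<equiv> ext.subspace S"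

abbreviation ext_span :: "'a::field ext set \<Rightarrow> 'a ext set" where
  "ext_span S \<equiv> ext.span S"

definition wedgek :: "nat \<Rightarrow> nat \<Rightarrow> 'a::field ext set" where
  "wedgek n k = {m. \<forall>T. m T \<noteq> 0 \<longrightarrow> T \<subseteq> {1..n} \<and> card T = k}"

text \<open>The k-th exterior power of V^(j) (span of e_h, h \<noteq> j).\<close>
definition wedgek_skip :: "nat \<Rightarrow> nat \<Rightarrow> nat \<Rightarrow> 'a::field ext set" where
  "wedgek_skip n j k = {m \<in> wedgek n k. \<forall>T. m T \<noteq> 0 \<longrightarrow> j \<notin> T}"

definition wedge_e :: "nat \<Rightarrow> 'a::field ext \<Rightarrow> 'a ext" where
  "wedge_e i y = (\<lambda>T. if i \<in> T then (-1) ^ card {s\<in>T. s < i} * y (T - {i}) else 0)"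

text \<open>Decomposition m = x + e_j \<and> y with x, y not involving e_j.\<close>
definition xpart :: "nat \<Rightarrow> 'a::field ext \<Rightarrow> 'a ext" where
  "xpart j m = (\<lambda>T. if j \<in> T then 0 else m T)"

definition ypart :: "nat \<Rightarrow> 'a::field ext \<Rightarrow> 'a ext" where
  "ypart j m = (\<lambda>S. if j \<in> S then 0 else (-1) ^ card {s \<in> insert j S. s < j} * m (insert j S))"

definition Nshift :: "nat \<Rightarrow> nat \<Rightarrow> 'a::field ext \<Rightarrow> 'a ext" where
  "Nshift j i m = (let z = xpart j m + wedge_e i (ypart j m)
                   in if z \<noteq> 0 then z else wedge_e j (ypart j m))"

definition Nshift_space :: "nat \<Rightarrow> nat \<Rightarrow> 'a::field ext set \<Rightarrow> 'a ext set" where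
  "Nshift_space j i L = ext_span (Nshift j i ` (L - {0}))"

definition set_plus :: "'a::field ext set \<Rightarrow> 'a ext set \<Rightarrow> 'a ext set" where
  "set_plus A B = {a + b | a b. a \<in> A \<and> b \<in> B}"

definition is_direct_sum :: "'a::field ext set \<Rightarrow> 'a ext set \<Rightarrow> 'a ext set \<Rightarrow> bool" where
  "is_direct_sum M A B \<longleftrightarrow> M = set_plus A B \<and> A \<inter> B = {0}"

end

theory Submission
  imports Defs
begin

text \<open>
  Write every m \<in> L as m = x + e_j \<wedge> y with x \<in> L and e_j \<wedge> y \<in> L; this is what monomiality
  buys. The shift sends m to x + e_i \<wedge> y, unless that vanishes, in which case e_i \<wedge> y = -x \<in> L
  and m goes to e_j \<wedge> y with y \<in> K'. Conversely x, e_i \<wedge> y (y \<in> K) and e_j \<wedge> y (y \<in> K') are the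
  shifts of x, e_j \<wedge> y and e_j \<wedge> y - e_i \<wedge> y, all in L. The sum is direct because the first
  summand avoids e_j while every element of e_j \<wedge> K' is divisible by it.
\<close>

interpretation wedge_e: module_hom "escale :: 'a::field \<Rightarrow> _" escale "wedge_e i" for i
  by unfold_locales (auto simp: wedge_e_def escale_def fun_eq_iff algebra_simps)

definition avoids :: "nat \<Rightarrow> 'a::field ext \<Rightarrow> bool" where
  "avoids j m \<longleftrightarrow> (\<forall>T. m T \<noteq> 0 \<longrightarrow> j \<notin> T)"

lemma avoids_if_wedgek_skip: "m \<in> wedgek_skip n j k \<Longrightarrow> avoids j m"
  by (auto simp: wedgek_skip_def avoids_def)

lemma avoids_zero [simp]: "avoids j 0"
  by (simp add: avoids_def)

lemma avoids_add: "avoids j a \<Longrightarrow> avoids j b \<Longrightarrow> avoids j (a + b)"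
  by (auto simp: avoids_def) (metis add.right_neutral)

lemma avoids_uminus: "avoids j (- a) \<longleftrightarrow> avoids j a"
  by (simp add: avoids_def)

lemma avoids_wedge_e: "i \<noteq> j \<Longrightarrow> avoids j y \<Longrightarrow> avoids j (wedge_e i y)"
  by (auto simp: avoids_def wedge_e_def)

lemma avoids_wedge_e_self_imp_zero: "avoids j (wedge_e j y) \<Longrightarrow> wedge_e j y = 0"
  unfolding avoids_def fun_eq_iff zero_fun_def by (metis wedge_e_def)

lemma xpart_add: "xpart j (a + b) = xpart j a + xpart j b"
  by (auto simp: xpart_def fun_eq_iff)

lemma ypart_add: "ypart j (a + b) = ypart j a + ypart j b"
  by (auto simp: ypart_def fun_eq_iff algebra_simps)

lemma xpart_avoids: "avoids j a \<Longrightarrow> xpart j a = a"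
  by (auto simp: xpart_def fun_eq_iff avoids_def)

lemma ypart_avoids: "avoids j a \<Longrightarrow> ypart j a = 0"
  by (auto simp: ypart_def fun_eq_iff avoids_def)

lemma xpart_wedge_e_self: "xpart j (wedge_e j y) = 0"
  by (auto simp: xpart_def wedge_e_def fun_eq_iff)

lemma ypart_wedge_e_self:
  assumes "avoids j y"
  shows "ypart j (wedge_e j y) = y"
proof
  fix S
  show "ypart j (wedge_e j y) S = y S"
  proof (cases "j \<in> S")
    case True
    with assms show ?thesis by (auto simp: ypart_def avoids_def)
  next
    case False
    then have "insert j S - {j} = S" by auto
    with False show ?thesis
      by (simp add: ypart_def wedge_e_def power_mult_distrib[symmetric] flip: mult.assoc)
  qed
qed

lemma Nshift_avoids:
  assumes "avoids j a"
  shows "Nshift j i a = a"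
  unfolding Nshift_def Let_def xpart_avoids[OF assms] ypart_avoids[OF assms] by simp

lemma Nshift_zero [simp]: "Nshift j i 0 = 0"
  by (simp add: Nshift_avoids)

lemma Nshift_add_wedge_e_self:
  assumes "avoids j a" "avoids j y"
  shows "Nshift j i (a + wedge_e j y) =
           (if a + wedge_e i y = 0 then wedge_e j y else a + wedge_e i y)"
  using assms
  by (simp add: Nshift_def Let_def xpart_add ypart_add xpart_avoids ypart_avoids
      xpart_wedge_e_self ypart_wedge_e_self)

lemma Nshift_mem_Nshift_space: "m \<in> L \<Longrightarrow> Nshift j i m \<in> Nshift_space j i L"
  by (cases "m = 0") (auto simp: Nshift_space_def intro: ext.span_base ext.span_zero)

lemma subspace_wedgek_skip: "ext_subspace (wedgek_skip n j k :: 'a::field ext set)"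
  unfolding ext.subspace_def
proof (intro conjI ballI allI)
  show "0 \<in> wedgek_skip n j k" by (simp add: wedgek_skip_def wedgek_def)
next
  fix x y :: "'a ext" assume "x \<in> wedgek_skip n j k" "y \<in> wedgek_skip n j k"
  moreover have "x T \<noteq> 0 \<or> y T \<noteq> 0" if "(x + y) T \<noteq> 0" for T
    using that by auto
  ultimately show "x + y \<in> wedgek_skip n j k"
    unfolding wedgek_skip_def wedgek_def by blast
next
  fix c x assume "x \<in> wedgek_skip n j k"
  then show "escale c x \<in> wedgek_skip n j k"
    unfolding wedgek_skip_def wedgek_def by (auto simp: escale_def)
qed

lemma subspace_wedge_e_preimage:
  "ext_subspace W \<Longrightarrow> ext_subspace L \<Longrightarrow> ext_subspace {y \<in> W. wedge_e i y \<in> L}"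
  using ext.subspace_inter[OF _ wedge_e.subspace_linear_preimage] by (simp add: Collect_conj_eq)

lemma Greatest_wedge_e_preimage:
  assumes "ext_subspace W" "ext_subspace L"
  shows "(GREATEST K. ext_subspace K \<and> K \<subseteq> W \<and> wedge_e i ` K \<subseteq> L) = {y \<in> W. wedge_e i y \<in> L}"
  by (rule Greatest_equality) (use subspace_wedge_e_preimage[OF assms] in auto)

lemma set_plusI: "a \<in> A \<Longrightarrow> b \<in> B \<Longrightarrow> a + b \<in> set_plus A B"
  by (auto simp: set_plus_def)

lemma set_plusE:
  assumes "x \<in> set_plus A B"
  obtains a b where "a \<in> A" "b \<in> B" "x = a + b"
  using assms by (auto simp: set_plus_def)

lemma set_plus_mono: "A \<subseteq> A' \<Longrightarrow> B \<subseteq> B' \<Longrightarrow> set_plus A B \<subseteq> set_plus A' B'"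
  by (auto simp: set_plus_def)

lemma subset_set_plus_left: "0 \<in> B \<Longrightarrow> A \<subseteq> set_plus A B"
  using set_plusI[of _ A 0 B] by auto

lemma subset_set_plus_right: "0 \<in> A \<Longrightarrow> B \<subseteq> set_plus A B"
  using set_plusI[of 0 A _ B] by auto

lemma set_plus_subset_subspace:
  "ext_subspace S \<Longrightarrow> A \<subseteq> S \<Longrightarrow> B \<subseteq> S \<Longrightarrow> set_plus A B \<subseteq> S"
  by (auto elim!: set_plusE intro: ext.subspace_add)

lemma subspace_set_plus:
  assumes A: "ext_subspace A" and B: "ext_subspace B"
  shows "ext_subspace (set_plus A B)"
  unfolding ext.subspace_def
proof (intro conjI ballI allI)
  show "0 \<in> set_plus A B"
    using set_plusI[OF ext.subspace_0[OF A] ext.subspace_0[OF B]] by simp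
next
  fix x y assume "x \<in> set_plus A B" "y \<in> set_plus A B"
  then obtain a b a' b' where "a \<in> A" "b \<in> B" "a' \<in> A" "b' \<in> B" "x = a + b" "y = a' + b'"
    by (auto elim!: set_plusE)
  then show "x + y \<in> set_plus A B"
    using set_plusI[OF ext.subspace_add[OF A] ext.subspace_add[OF B]]
    by (simp add: algebra_simps)
next
  fix c x assume "x \<in> set_plus A B"
  then obtain a b where "a \<in> A" "b \<in> B" "x = a + b"
    by (auto elim!: set_plusE)
  then show "escale c x \<in> set_plus A B"
    using set_plusI[OF ext.subspace_scale[OF A] ext.subspace_scale[OF B]]
    by (simp add: ext.scale_right_distrib)
qed

text \<open>A and Y play the roles of L \<inter> \<wedge>^k V^(j) and K; Y' below is K'.\<close>

locale monomial_shift =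
  fixes L A Y :: "'a::field ext set" and i j :: nat
  assumes ij: "i \<noteq> j"
    and L: "ext_subspace L" and A: "ext_subspace A" and Y: "ext_subspace Y"
    and A_sub: "A \<subseteq> L" and A_avoids: "\<And>a. a \<in> A \<Longrightarrow> avoids j a"
    and Y_wedge: "wedge_e j ` Y \<subseteq> L" and Y_avoids: "\<And>y. y \<in> Y \<Longrightarrow> avoids j y"
    and monomial: "L \<subseteq> set_plus A (wedge_e j ` Y)"
begin

definition Y' :: "'a ext set" where
  "Y' = {y \<in> Y. wedge_e i y \<in> L}"

definition shifted :: "'a ext set" where
  "shifted = set_plus (set_plus A (wedge_e i ` Y)) (wedge_e j ` Y')"

lemma subspace_Y': "ext_subspace Y'"
  unfolding Y'_def using Y L by (rule subspace_wedge_e_preimage)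

lemma subspace_shifted: "ext_subspace shifted"
  unfolding shifted_def
  by (intro subspace_set_plus A wedge_e.subspace_image Y subspace_Y')

lemma zero_mem_summands:
  "0 \<in> set_plus A (wedge_e i ` Y)" "0 \<in> wedge_e j ` Y'"
  using ext.subspace_0 subspace_set_plus[OF A wedge_e.subspace_image[OF Y]]
    wedge_e.subspace_image[OF subspace_Y'] by blast+

lemma Nshift_mem_shifted:
  assumes "m \<in> L"
  shows "Nshift j i m \<in> shifted"
proof -
  obtain a y where a: "a \<in> A" and y: "y \<in> Y" and m: "m = a + wedge_e j y"
    using assms monomial by (auto elim!: set_plusE)
  have shift: "Nshift j i m = (if a + wedge_e i y = 0 then wedge_e j y else a + wedge_e i y)"
    unfolding m using A_avoids[OF a] Y_avoids[OF y] by (rule Nshift_add_wedge_e_self)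
  show ?thesis
  proof (cases "a + wedge_e i y = 0")
    case True
    then have "wedge_e i y = - a" by (simp add: add_eq_0_iff)
    with a A_sub have "wedge_e i y \<in> L" using ext.subspace_neg[OF L] by auto
    with y have "wedge_e j y \<in> wedge_e j ` Y'" by (auto simp: Y'_def)
    with True shift show ?thesis
      using subset_set_plus_right[OF zero_mem_summands(1), of "wedge_e j ` Y'"]
      unfolding shifted_def by auto
  next
    case False
    have "a + wedge_e i y \<in> set_plus A (wedge_e i ` Y)" using a y by (auto intro: set_plusI)
    with False shift show ?thesis
      using subset_set_plus_left[OF zero_mem_summands(2), of "set_plus A (wedge_e i ` Y)"]
      unfolding shifted_def by auto
  qed
qed

lemma Nshift_space_subset: "Nshift_space j i L \<subseteq> shifted"
  unfolding Nshift_space_def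
  using Nshift_mem_shifted subspace_shifted by (intro ext.span_minimal) auto

lemma A_subset_Nshift_space: "A \<subseteq> Nshift_space j i L"
proof
  fix a assume a: "a \<in> A"
  then have "Nshift j i a \<in> Nshift_space j i L"
    using A_sub by (blast intro: Nshift_mem_Nshift_space)
  then show "a \<in> Nshift_space j i L"
    by (simp add: Nshift_avoids[OF A_avoids[OF a]])
qed

lemma wedge_e_Y_subset_Nshift_space: "wedge_e i ` Y \<subseteq> Nshift_space j i L"
proof
  fix x assume "x \<in> wedge_e i ` Y"
  then obtain y where y: "y \<in> Y" and x: "x = wedge_e i y" by blast
  show "x \<in> Nshift_space j i L"
  proof (cases "x = 0")
    case True
    then show ?thesis by (simp add: Nshift_space_def ext.span_zero)
  next
    case False
    have "Nshift j i (0 + wedge_e j y) = x"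
      using Nshift_add_wedge_e_self[OF avoids_zero Y_avoids[OF y], of i] False x by simp
    with Nshift_mem_Nshift_space[of "wedge_e j y"] y Y_wedge show ?thesis by auto
  qed
qed

lemma wedge_e_Y'_subset_Nshift_space: "wedge_e j ` Y' \<subseteq> Nshift_space j i L"
proof
  fix x assume "x \<in> wedge_e j ` Y'"
  then obtain y where y: "y \<in> Y" "wedge_e i y \<in> L" and x: "x = wedge_e j y"
    by (auto simp: Y'_def)
  have m: "- wedge_e i y + wedge_e j y \<in> L"
    using y Y_wedge by (blast intro: ext.subspace_add[OF L] ext.subspace_neg[OF L])
  have "avoids j (- wedge_e i y)"
    using avoids_wedge_e[OF ij Y_avoids[OF y(1)]] by (simp add: avoids_uminus)
  from Nshift_add_wedge_e_self[OF this Y_avoids[OF y(1)], of i]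
  have "Nshift j i (- wedge_e i y + wedge_e j y) = x"
    by (simp add: x)
  with Nshift_mem_Nshift_space[OF m, of j i] show "x \<in> Nshift_space j i L"
    by simp
qed

lemma Nshift_space_eq: "Nshift_space j i L = shifted"
proof
  have "ext_subspace (Nshift_space j i L)"
    by (simp add: Nshift_space_def)
  then show "shifted \<subseteq> Nshift_space j i L"
    unfolding shifted_def
    by (intro set_plus_subset_subspace A_subset_Nshift_space wedge_e_Y_subset_Nshift_space
        wedge_e_Y'_subset_Nshift_space)
qed (rule Nshift_space_subset)

lemma shifted_summands_disjoint:
  "set_plus A (wedge_e i ` Y) \<inter> wedge_e j ` Y' = {0}"
proof -
  have "x = 0" if "x \<in> set_plus A (wedge_e i ` Y)" "x \<in> wedge_e j ` Y'" for x
  proof -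
    from that(1) obtain a y where "a \<in> A" "y \<in> Y" "x = a + wedge_e i y"
      by (auto elim: set_plusE)
    then have "avoids j x"
      by (simp add: avoids_add avoids_wedge_e ij A_avoids Y_avoids)
    with that(2) show ?thesis using avoids_wedge_e_self_imp_zero by blast
  qed
  then show ?thesis using zero_mem_summands by blast
qed

theorem is_direct_sum_Nshift_space:
  "is_direct_sum (Nshift_space j i L) (set_plus A (wedge_e i ` Y)) (wedge_e j ` Y')"
  unfolding is_direct_sum_def
  using Nshift_space_eq shifted_summands_disjoint by (simp add: shifted_def)

end

theorem lemma3p5:
  fixes L :: "'a::field ext set" and n k i j :: nat
  assumes char: "(2::'a) \<noteq> 0"
    and L_sub: "L \<subseteq> wedgek n k" and L_space: "ext_subspace L"
    and ij: "1 \<le> i" "i < j" "j \<le> n"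
    and mono: "is_direct_sum L (L \<inter> wedgek_skip n j k)
                  (L \<inter> wedge_e j ` wedgek_skip n j (k - 1))"
  defines "K \<equiv> GREATEST K. ext_subspace K \<and> K \<subseteq> wedgek_skip n j (k - 1)
                             \<and> wedge_e j ` K \<subseteq> L"
  defines "K' \<equiv> GREATEST K'. ext_subspace K' \<and> K' \<subseteq> K \<and> wedge_e i ` K' \<subseteq> L"
  shows "is_direct_sum (Nshift_space j i L)
           (set_plus (L \<inter> wedgek_skip n j k) (wedge_e i ` K))
           (wedge_e j ` K')"
proof -
  have K: "K = {y \<in> wedgek_skip n j (k - 1). wedge_e j y \<in> L}"
    unfolding K_def using subspace_wedgek_skip L_space by (rule Greatest_wedge_e_preimage)
  have K_space: "ext_subspace K"
    unfolding K using subspace_wedgek_skip L_space by (rule subspace_wedge_e_preimage)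
  have K': "K' = {y \<in> K. wedge_e i y \<in> L}"
    unfolding K'_def using K_space L_space by (rule Greatest_wedge_e_preimage)
  have "L = set_plus (L \<inter> wedgek_skip n j k) (L \<inter> wedge_e j ` wedgek_skip n j (k - 1))"
    using mono by (simp add: is_direct_sum_def)
  also have "\<dots> \<subseteq> set_plus (L \<inter> wedgek_skip n j k) (wedge_e j ` K)"
    by (rule set_plus_mono) (auto simp: K)
  finally have "L \<subseteq> set_plus (L \<inter> wedgek_skip n j k) (wedge_e j ` K)" .
  then interpret monomial_shift L "L \<inter> wedgek_skip n j k" K i j
    using ij L_space K_space by unfold_locales
      (auto simp: K intro: ext.subspace_inter subspace_wedgek_skip avoids_if_wedgek_skip)
  show ?thesis
    using is_direct_sum_Nshift_space by (simp add: Y'_def K')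
qed

end
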